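(* Let $\mathfrak g$ be a finite-dimensional Lie algebra over a field $\mathbb K$ of characteristic zero, let $V=(V^\bullet,d^V)$ be a non-negative bounded dg $\mathfrak g$-module, and let $u=\min\{\mathrm{top}(V),\dim\mathfrak g\}$. Given a family of linear maps $\{\alpha_k\colon V^k\otimes\wedge^k\mathfrak g\to\mathfrak g\}_{0\le k\le u}$ (with $\alpha_k:=0$ for $k>u$), the corresponding degree $0$, $\Omega_{\mathfrak g}$-linear map $\alpha\colon\Omega_{\mathfrak g}(V)\to\Omega_{\mathfrak g}(\mathfrak g)$ defines a dg Loday–Pirashvili module $(V,\alpha)$ if and only if for all $0\le k\le u$, all $x_1,\dots,x_{k+1}\in\mathfrak g$ and all $v\in V^k$: \begin{align*} \alpha_{k+1}\big(d^V_kv\mid x_1,\dots,x_{k+1}\big)&=\sum_{i=1}^{k+1}(-1)^{i+1}\Big([x_i,\alpha_k(v\mid x_1,\dots,\widehat{x_i},\dots,x_{k+1})]-\alpha_k(x_i\triangleright v\mid x_1,\dots,\widehat{x_i},\dots,x_{k+1})\Big)\\ &\quad+\sum_{i<j}(-1)^{i+j}\alpha_k\big(v\mid[x_i,x_j],x_1,\dots,\widehat{x_i},\dots,\widehat{x_j},\dots,x_{k+1}\big). \end{align*}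
   Context: A dg $\mathfrak g$-module is a bounded cochain complex $(V^\bullet,d^V)$ of $\mathfrak g$-modules with $\mathfrak g$-equivariant differentials; non-negative means $V^i=0$ for $i<0$, and $\mathrm{top}(V)$ is the highest degree with $V^i\neq0$. $\Omega_{\mathfrak g}=\wedge^\bullet\mathfrak g^\vee$; $\Omega_{\mathfrak g}(V)=\wedge^\bullet\mathfrak g^\vee\otimes V$ graded by $p+q$ on $\wedge^p\mathfrak g^\vee\otimes V^q$, with total differential $d^V_{\mathrm{tot}}=d^V_{\mathrm{CE}}+d^V$ ($d^V_{\mathrm{CE}}$ the Chevalley–Eilenberg differential of the $\mathfrak g$-module $\oplus_iV^i$, $d^V(\omega\otimes v)=(-1)^p\omega\otimes d^Vv$ for $\omega\in\wedge^p\mathfrak g^\vee$). $\mathfrak g$ is regarded as a dg $\mathfrak g$-module concentrated in degree $0$ with the adjoint action, so $\Omega_{\mathfrak g}(\mathfrak g)$ has differential $d^{\mathfrak g}_{\mathrm{CE}}$. Each $\alpha_k$ is viewed as a map $V^k\to\wedge^k\mathfrak g^\vee\otimes\mathfrak g$, and $\alpha$ is defined by $\alpha(\omega\otimes v)=\omega\wedge\alpha_k(v)$ for $v\in V^k$. A dg Loday–Pirashvili module over $\mathfrak g$ is a pair $(V,\alpha)$ with $V$ a non-negative bounded dg $\mathfrak g$-module and $\alpha\colon\Omega_{\mathfrak g}(V)\to\Omega_{\mathfrak g}(\mathfrak g)$ a degree $0$ $\Omega_{\mathfrak g}$-linear map with $\alpha\circ d^V_{\mathrm{tot}}=d^{\mathfrak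 g}_{\mathrm{CE}}\circ\alpha$. *)

theory Defs
  imports Complex_Main
begin

definition sgn_pow :: "nat \<Rightarrow> 'w::ab_group_add \<Rightarrow> 'w" where
  "sgn_pow n x = (if even n then x else - x)"

(* remove the i-th entry (0-based) of a list: the hat notation *)
definition del_nth :: "nat \<Rightarrow> 'a list \<Rightarrow> 'a list" where
  "del_nth i xs = take i xs @ drop (Suc i) xs"

definition lie_algebra :: "('k::field \<Rightarrow> 'g::ab_group_add \<Rightarrow> 'g) \<Rightarrow> ('g \<Rightarrow> 'g \<Rightarrow> 'g) \<Rightarrow> bool" where
  "lie_algebra sc br \<longleftrightarrow> vector_space sc
     \<and> (\<forall>c x y z. br (sc c x + y) z = sc c (br x z) + br y z)
     \<and> (\<forall>c x y z. br x (sc c y + z) = sc c (br x y) + br x z)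
     \<and> (\<forall>x. br x x = 0)
     \<and> (\<forall>x y z. br x (br y z) + br y (br z x) + br z (br x y) = 0)"

definition finite_dim :: "('k::field \<Rightarrow> 'g::ab_group_add \<Rightarrow> 'g) \<Rightarrow> bool" where
  "finite_dim sc \<longleftrightarrow> (\<exists>B. finite B \<and> module.span sc B = UNIV)"

definition lie_module :: "('k::field \<Rightarrow> 'g::ab_group_add \<Rightarrow> 'g) \<Rightarrow> ('g \<Rightarrow> 'g \<Rightarrow> 'g)
    \<Rightarrow> ('k \<Rightarrow> 'v::ab_group_add \<Rightarrow> 'v) \<Rightarrow> 'v set \<Rightarrow> ('g \<Rightarrow> 'v \<Rightarrow> 'v) \<Rightarrow> bool" where
  "lie_module sc br scv W act \<longleftrightarrow> vector_space scv \<and> module.subspace scv W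
     \<and> (\<forall>x. \<forall>v\<in>W. act x v \<in> W)
     \<and> (\<forall>c x y. \<forall>v\<in>W. act (sc c x + y) v = scv c (act x v) + act y v)
     \<and> (\<forall>c x. \<forall>v\<in>W. \<forall>w\<in>W. act x (scv c v + w) = scv c (act x v) + act x w)
     \<and> (\<forall>x y. \<forall>v\<in>W. act (br x y) v = act x (act y v) - act y (act x v))"

(* Non-negative bounded dg g-module: V^q = V q (q :: nat, so V^i = 0 for i < 0),
   action act q on V^q, differential d q : V^q \<rightarrow> V^(q+1). *)
definition dg_module :: "('k::field \<Rightarrow> 'g::ab_group_add \<Rightarrow> 'g) \<Rightarrow> ('g \<Rightarrow> 'g \<Rightarrow> 'g)
    \<Rightarrow> ('k \<Rightarrow> 'v::ab_group_add \<Rightarrow> 'v) \<Rightarrow> (nat \<Rightarrow> 'v set) \<Rightarrow> (nat \<Rightarrow> 'g \<Rightarrow> 'v \<Rightarrow> 'v)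
    \<Rightarrow> (nat \<Rightarrow> 'v \<Rightarrow> 'v) \<Rightarrow> bool" where
  "dg_module sc br scv V act d \<longleftrightarrow>
     (\<forall>q. lie_module sc br scv (V q) (act q))
     \<and> (\<forall>q. \<forall>v\<in>V q. d q v \<in> V (Suc q))
     \<and> (\<forall>q c. \<forall>v\<in>V q. \<forall>w\<in>V q. d q (scv c v + w) = scv c (d q v) + d q w)
     \<and> (\<forall>q. \<forall>v\<in>V q. d (Suc q) (d q v) = 0)
     \<and> (\<forall>q x. \<forall>v\<in>V q. d q (act q x v) = act (Suc q) x (d q v))
     \<and> (\<exists>N. \<forall>i>N. V i = {0})"

definition topdeg :: "(nat \<Rightarrow> 'v::zero set) \<Rightarrow> nat" where
  "topdeg V = (GREATEST i. V i \<noteq> {0})"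

definition alt_map :: "('k::field \<Rightarrow> 'g::ab_group_add \<Rightarrow> 'g) \<Rightarrow> ('k \<Rightarrow> 'w::ab_group_add \<Rightarrow> 'w)
    \<Rightarrow> nat \<Rightarrow> ('g list \<Rightarrow> 'w) \<Rightarrow> bool" where
  "alt_map sc scw n f \<longleftrightarrow>
     (\<forall>xs i c y z. length xs = n \<longrightarrow> i < n \<longrightarrow>
         f (xs[i := sc c y + z]) = scw c (f (xs[i := y])) + f (xs[i := z]))
     \<and> (\<forall>xs i j. length xs = n \<longrightarrow> i < j \<longrightarrow> j < n \<longrightarrow> xs ! i = xs ! j \<longrightarrow> f xs = 0)"

(* Omega^p_g(W) = wedge^p g^\<or> \<otimes> W, modelled (g finite-dimensional) as alternating
   p-linear maps g^p \<rightarrow> W *)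
definition cochains :: "('k::field \<Rightarrow> 'g::ab_group_add \<Rightarrow> 'g) \<Rightarrow> ('k \<Rightarrow> 'w::ab_group_add \<Rightarrow> 'w)
    \<Rightarrow> nat \<Rightarrow> 'w set \<Rightarrow> ('g list \<Rightarrow> 'w) set" where
  "cochains sc scw p W = {f. alt_map sc scw p f \<and> (\<forall>xs. length xs = p \<longrightarrow> f xs \<in> W)}"

definition ce_diff :: "('g \<Rightarrow> 'g \<Rightarrow> 'g) \<Rightarrow> ('g \<Rightarrow> 'w \<Rightarrow> 'w) \<Rightarrow> ('g list \<Rightarrow> 'w::ab_group_add)
    \<Rightarrow> 'g list \<Rightarrow> 'w" where
  "ce_diff br rho eta xs =
     (\<Sum>i<length xs. sgn_pow i (rho (xs ! i) (eta (del_nth i xs))))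
     + (\<Sum>(i, j)\<in>{(i, j). i < j \<and> j < length xs}.
          sgn_pow (i + j) (eta (br (xs ! i) (xs ! j) # del_nth i (del_nth j xs))))"

definition lp_family :: "('k::field \<Rightarrow> 'g::ab_group_add \<Rightarrow> 'g) \<Rightarrow> ('k \<Rightarrow> 'v::ab_group_add \<Rightarrow> 'v)
    \<Rightarrow> (nat \<Rightarrow> 'v set) \<Rightarrow> nat \<Rightarrow> (nat \<Rightarrow> 'v \<Rightarrow> 'g list \<Rightarrow> 'g) \<Rightarrow> bool" where
  "lp_family sc scv V u alpha \<longleftrightarrow>
     (\<forall>k\<le>u. \<forall>xs c. length xs = k \<longrightarrow> (\<forall>v\<in>V k. \<forall>w\<in>V k.
         alpha k (scv c v + w) xs = sc c (alpha k v xs) + alpha k w xs))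
     \<and> (\<forall>k\<le>u. \<forall>v\<in>V k. alt_map sc sc k (alpha k v))
     \<and> (\<forall>k>u. \<forall>v xs. alpha k v xs = 0)"

(* The induced map alpha : Omega^p_g(V^q) \<rightarrow> Omega^(p+q)_g(g),
   alpha(omega \<otimes> v) = omega \<and> alpha_q(v), written out via (p,q)-shuffles:
   a subset S of {0..<p+q} of size p, sign (-1)^(sum S - p(p-1)/2). *)
definition lp_ext :: "(nat \<Rightarrow> 'v \<Rightarrow> 'g list \<Rightarrow> 'g::ab_group_add) \<Rightarrow> nat \<Rightarrow> nat
    \<Rightarrow> ('g list \<Rightarrow> 'v) \<Rightarrow> 'g list \<Rightarrow> 'g" where
  "lp_ext alpha p q eta xs =
     (\<Sum>S\<in>{S. S \<subseteq> {..<p + q} \<and> card S = p}.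
        sgn_pow (\<Sum>S + p * (p - 1) div 2)
          (alpha q (eta (nths xs S)) (nths xs ({..<p + q} - S))))"

(* (V, alpha) is a dg Loday-Pirashvili module: alpha \<circ> d_tot = d_CE \<circ> alpha on each
   homogeneous component Omega^p_g(V^q), where d_tot = d_CE^V + (-1)^p d^V *)
definition dg_LP_module :: "('k::field \<Rightarrow> 'g::ab_group_add \<Rightarrow> 'g) \<Rightarrow> ('g \<Rightarrow> 'g \<Rightarrow> 'g)
    \<Rightarrow> ('k \<Rightarrow> 'v::ab_group_add \<Rightarrow> 'v) \<Rightarrow> (nat \<Rightarrow> 'v set) \<Rightarrow> (nat \<Rightarrow> 'g \<Rightarrow> 'v \<Rightarrow> 'v)
    \<Rightarrow> (nat \<Rightarrow> 'v \<Rightarrow> 'v) \<Rightarrow> (nat \<Rightarrow> 'v \<Rightarrow> 'g list \<Rightarrow> 'g) \<Rightarrow> bool" where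
  "dg_LP_module sc br scv V act d alpha \<longleftrightarrow> dg_module sc br scv V act d \<and>
     (\<forall>p q. \<forall>eta\<in>cochains sc scv p (V q). \<forall>xs. length xs = p + q + 1 \<longrightarrow>
        lp_ext alpha (Suc p) q (ce_diff br (act q) eta) xs
          + sgn_pow p (lp_ext alpha p (Suc q) (\<lambda>ys. d q (eta ys)) xs)
        = ce_diff br br (lp_ext alpha p q eta) xs)"

end

theory Submission
  imports Defs
begin

(*
  On Omega^p(V^q) the map alpha is a shuffle sum of alpha_q: on arguments x_1, ..., x_(p+q) it is
  the signed sum, over all p-element sets S of positions, of alpha_q(eta(x_S) | x_(not S)).
  Expanding d_CE of such a shuffle sum and regrouping the terms according to where the one or two
  distinguished arguments sit relative to the shuffle gives a Leibniz rule

    d_CE (alpha eta) = alpha (d_CE eta) + (-1)^p alpha' eta,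

  where alpha' is the shuffle sum of the defect Psi_q(v) = d_CE(alpha_q v) - alpha_q(_ |> v).
  So alpha intertwines d_tot and d_CE iff the shuffle sums of alpha_(q+1) o d and of Psi_q agree
  on every cochain. On 0-cochains a shuffle sum is plain evaluation, hence this is the identity
  alpha_(q+1)(d v) = Psi_q(v) in every degree q; above u both sides vanish.
*)

section \<open>Positions, subsets and sublists\<close>

definition rank_in :: "nat set \<Rightarrow> nat \<Rightarrow> nat" where
  "rank_in A i = card {k\<in>A. k < i}"

definition ksubsets :: "'a set \<Rightarrow> nat \<Rightarrow> 'a set set" where
  "ksubsets A p = {S. S \<subseteq> A \<and> card S = p}"

definition ordered_pairs :: "'a::linorder set \<Rightarrow> ('a \<times> 'a) set" where
  "ordered_pairs A = {(i, j). i \<in> A \<and> j \<in> A \<and> i < j}"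

lemma finite_ksubsets [simp]: "finite A \<Longrightarrow> finite (ksubsets A p)"
  unfolding ksubsets_def by (rule finite_subset[of _ "Pow A"]) auto

lemma finite_if_in_ksubsets: "finite A \<Longrightarrow> S \<in> ksubsets A p \<Longrightarrow> finite S"
  unfolding ksubsets_def using finite_subset by blast

lemma finite_ordered_pairs [simp]: "finite A \<Longrightarrow> finite (ordered_pairs A)"
  by (rule finite_subset[of _ "A \<times> A"]) (auto simp: ordered_pairs_def)

lemma ordered_pairs_lessThan: "ordered_pairs {..<n} = {(i, j). i < j \<and> j < n}"
  by (auto simp: ordered_pairs_def)

lemma ksubsets_0: "finite A \<Longrightarrow> ksubsets A 0 = {{}}"
  by (auto simp: ksubsets_def) (metis card_0_eq empty_iff finite_subset)

lemma rank_in_less_card: "finite A \<Longrightarrow> a \<in> A \<Longrightarrow> rank_in A a < card A"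
  unfolding rank_in_def by (rule psubset_card_mono) auto

lemma rank_in_strict_mono: "finite A \<Longrightarrow> a \<in> A \<Longrightarrow> a < b \<Longrightarrow> rank_in A a < rank_in A b"
  unfolding rank_in_def by (rule psubset_card_mono) auto

lemma rank_in_less_iff:
  "finite A \<Longrightarrow> a \<in> A \<Longrightarrow> b \<in> A \<Longrightarrow> rank_in A a < rank_in A b \<longleftrightarrow> a < b"
  by (metis linorder_neqE_nat not_less_iff_gr_or_eq rank_in_strict_mono)

lemma rank_in_eq_iff:
  "finite A \<Longrightarrow> a \<in> A \<Longrightarrow> b \<in> A \<Longrightarrow> rank_in A a = rank_in A b \<longleftrightarrow> a = b"
  by (metis linorder_neqE_nat nat_less_le rank_in_strict_mono)

lemma inj_on_rank_in: "finite A \<Longrightarrow> inj_on (rank_in A) A"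
  by (simp add: inj_on_def rank_in_eq_iff)

lemma bij_betw_rank_in: "finite A \<Longrightarrow> bij_betw (rank_in A) A {..<card A}"
proof -
  assume fin: "finite A"
  have "rank_in A ` A \<subseteq> {..<card A}" using rank_in_less_card fin by auto
  moreover have "card (rank_in A ` A) = card {..<card A}"
    using card_image[OF inj_on_rank_in[OF fin]] by simp
  ultimately have "rank_in A ` A = {..<card A}"
    by (simp add: card_subset_eq)
  then show ?thesis using inj_on_rank_in[OF fin] by (simp add: bij_betw_def)
qed

lemma rank_in_insert_self: "i \<notin> S \<Longrightarrow> rank_in (insert i S) i = card {x\<in>S. x < i}"
  unfolding rank_in_def by (rule arg_cong[where f=card]) auto

lemma rank_in_remove_greater: "s < t \<Longrightarrow> rank_in (T - {t}) s = rank_in T s"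
  unfolding rank_in_def by (rule arg_cong[where f=card]) auto

lemma rank_in_lessThan_Diff:
  assumes "s \<le> n"
  shows "rank_in ({..<n} - X) s + card {x\<in>X. x < s} = s"
proof -
  have "{k\<in>{..<n} - X. k < s} \<union> {x\<in>X. x < s} = {..<s}" using assms by auto
  moreover have "{k\<in>{..<n} - X. k < s} \<inter> {x\<in>X. x < s} = {}" by auto
  moreover have "finite {k\<in>{..<n} - X. k < s}" "finite {x\<in>X. x < s}" by auto
  ultimately show ?thesis unfolding rank_in_def
    by (metis card_Un_disjoint card_lessThan)
qed

lemma rank_in_lessThan: "s \<le> n \<Longrightarrow> rank_in {..<n} s = s"
  using rank_in_lessThan_Diff[of s n "{}"] by simp

lemma sum_rank_in_lessThan_Diff:
  assumes "finite S" "finite X" "S \<subseteq> {..<n} - X"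
  shows "(\<Sum>s\<in>S. rank_in ({..<n} - X) s) + (\<Sum>x\<in>X. card {s\<in>S. x < s}) = \<Sum>S"
proof -
  have card_filter: "card {y\<in>Y. P y} = (\<Sum>y\<in>Y. if P y then 1 else 0)" if "finite Y" for Y P
    using that by (simp flip: sum.inter_filter)
  have "(\<Sum>x\<in>X. card {s\<in>S. x < s}) = (\<Sum>s\<in>S. card {x\<in>X. x < s})"
    using assms(1,2) by (simp add: card_filter sum.swap[of _ S X])
  then have "(\<Sum>s\<in>S. rank_in ({..<n} - X) s) + (\<Sum>x\<in>X. card {s\<in>S. x < s})
      = (\<Sum>s\<in>S. rank_in ({..<n} - X) s + card {x\<in>X. x < s})"
    by (simp add: sum.distrib)
  also have "\<dots> = (\<Sum>s\<in>S. s)"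
    by (rule sum.cong[OF refl]) (use assms(3) rank_in_lessThan_Diff in auto)
  finally show ?thesis by simp
qed

lemma card_less_plus_card_greater:
  assumes "finite (S :: nat set)" "i \<notin> S"
  shows "card {s\<in>S. s < i} + card {s\<in>S. i < s} = card S"
proof -
  have "{s\<in>S. s < i} \<union> {s\<in>S. i < s} = S" using assms(2) by (auto simp: not_less_iff_gr_or_eq)
  moreover have "{s\<in>S. s < i} \<inter> {s\<in>S. i < s} = {}" by auto
  ultimately show ?thesis using assms(1)
    by (metis (no_types, lifting) card_Un_disjoint finite_Un)
qed

lemma nths_cong_length:
  "(\<And>i. i < length xs \<Longrightarrow> i \<in> A \<longleftrightarrow> i \<in> B) \<Longrightarrow> nths xs A = nths xs B"
proof (induction xs arbitrary: A B)
  case (Cons x xs)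
  have "nths xs {j. Suc j \<in> A} = nths xs {j. Suc j \<in> B}"
    by (rule Cons.IH) (use Cons.prems in auto)
  moreover have "0 \<in> A \<longleftrightarrow> 0 \<in> B" using Cons.prems by auto
  ultimately show ?case by (simp add: nths_Cons)
qed simp

lemma nths_singleton_set: "i < length xs \<Longrightarrow> nths xs {i} = [xs ! i]"
proof (induction xs arbitrary: i)
  case (Cons x xs)
  then show ?case
    by (cases i) (simp_all add: nths_Cons)
qed simp

lemma length_nths_subset: "A \<subseteq> {..<length xs} \<Longrightarrow> length (nths xs A) = card A"
  unfolding length_nths by (rule arg_cong[where f=card]) auto

lemma nths_nths_rank_in: "nths (nths xs A) B = nths xs {i \<in> A. rank_in A i \<in> B}"
  unfolding nths_nths rank_in_def by (rule arg_cong[where f="nths xs"]) auto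

lemma nths_nths_image_rank_in:
  "finite A \<Longrightarrow> B \<subseteq> A \<Longrightarrow> nths (nths xs A) (rank_in A ` B) = nths xs B"
  unfolding nths_nths_rank_in
  by (rule arg_cong[where f="nths xs"]) (auto simp: rank_in_eq_iff subset_iff)

lemma nth_nths_rank_in:
  assumes "finite A" "a \<in> A" "A \<subseteq> {..<length xs}"
  shows "nths xs A ! rank_in A a = xs ! a"
proof -
  have a: "rank_in A a < length (nths xs A)"
    using rank_in_less_card[OF assms(1,2)] length_nths_subset[OF assms(3)] by simp
  have "[nths xs A ! rank_in A a] = nths (nths xs A) (rank_in A ` {a})"
    using nths_singleton_set[OF a] by simp
  also have "\<dots> = nths xs {a}" using assms by (intro nths_nths_image_rank_in) auto
  also have "\<dots> = [xs ! a]" using assms by (intro nths_singleton_set) auto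
  finally show ?thesis by simp
qed

lemma del_nth_eq_nths: "del_nth i xs = nths xs (- {i})"
proof (induction xs arbitrary: i)
  case (Cons x xs)
  show ?case
  proof (cases i)
    case 0
    then show ?thesis
      by (simp add: del_nth_def nths_Cons) (metis Collect_const nths_all UNIV_I)
  next
    case (Suc k)
    have "{j. Suc j \<in> - {i}} = - {k}" using Suc by auto
    then show ?thesis using Cons.IH[of k] Suc by (simp add: del_nth_def nths_Cons)
  qed
qed (simp add: del_nth_def)

lemma del_nth_eq_nths_lessThan:
  "length xs = n \<Longrightarrow> del_nth i xs = nths xs ({..<n} - {i})"
  unfolding del_nth_eq_nths by (rule nths_cong_length) auto

lemma del_nth_nths_rank_in:
  "finite A \<Longrightarrow> a \<in> A \<Longrightarrow> del_nth (rank_in A a) (nths xs A) = nths xs (A - {a})"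
  unfolding del_nth_eq_nths nths_nths_rank_in
  by (rule arg_cong[where f="nths xs"]) (auto simp: rank_in_eq_iff)

lemma del_nth_del_nth_nths_rank_in:
  assumes "finite A" "s \<in> A" "t \<in> A" "s < t"
  shows "del_nth (rank_in A s) (del_nth (rank_in A t) (nths xs A)) = nths xs (A - {s, t})"
proof -
  have "del_nth (rank_in A s) (del_nth (rank_in A t) (nths xs A))
      = del_nth (rank_in (A - {t}) s) (nths xs (A - {t}))"
    by (simp add: del_nth_nths_rank_in assms(1,3) rank_in_remove_greater[OF assms(4)])
  also have "\<dots> = nths xs (A - {t} - {s})"
    using assms by (intro del_nth_nths_rank_in) auto
  also have "A - {t} - {s} = A - {s, t}" by auto
  finally show ?thesis .
qed

lemma sum_lessThan_card_rank_in:
  "finite A \<Longrightarrow> (\<Sum>a<card A. f a) = (\<Sum>t\<in>A. f (rank_in A t))"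
  using sum.reindex_bij_betw[OF bij_betw_rank_in, of A f] by simp

lemma sum_ordered_pairs_card_rank_in:
  assumes fin: "finite A"
  shows "(\<Sum>(a, b)\<in>{(a, b). a < b \<and> b < card A}. g a b)
       = (\<Sum>(s, t)\<in>ordered_pairs A. g (rank_in A s) (rank_in A t))"
proof -
  let ?h = "\<lambda>(s, t). (rank_in A s, rank_in A t)"
  have "bij_betw ?h (ordered_pairs A) {(a, b). a < b \<and> b < card A}"
  proof (rule bij_betwI')
    fix x y assume "x \<in> ordered_pairs A" "y \<in> ordered_pairs A"
    then show "(?h x = ?h y) = (x = y)" using fin by (auto simp: ordered_pairs_def rank_in_eq_iff)
  next
    fix x assume "x \<in> ordered_pairs A"
    then show "?h x \<in> {(a, b). a < b \<and> b < card A}"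
      using fin rank_in_strict_mono rank_in_less_card by (auto simp: ordered_pairs_def)
  next
    fix y assume "y \<in> {(a, b). a < b \<and> b < card A}"
    then obtain a b where ab: "y = (a, b)" "a < b" "b < card A" by auto
    then obtain s t where "s \<in> A" "t \<in> A" "rank_in A s = a" "rank_in A t = b"
      using bij_betw_rank_in[OF fin] unfolding bij_betw_def
      by (metis imageE lessThan_iff order.strict_trans)
    then show "\<exists>x\<in>ordered_pairs A. y = ?h x"
      using ab fin rank_in_less_iff by (intro bexI[of _ "(s, t)"]) (auto simp: ordered_pairs_def)
  qed
  from sum.reindex_bij_betw[OF this, of "\<lambda>(a, b). g a b"] show ?thesis
    by (simp add: case_prod_beta)
qed

lemma sum_positions_nths:
  assumes "finite A" "A \<subseteq> {..<length xs}"
  shows "(\<Sum>a<length (nths xs A). f a (nths xs A ! a) (del_nth a (nths xs A)))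
       = (\<Sum>i\<in>A. f (rank_in A i) (xs ! i) (nths xs (A - {i})))"
  unfolding length_nths_subset[OF assms(2)] sum_lessThan_card_rank_in[OF assms(1)]
  by (intro sum.cong refl)
    (simp add: nth_nths_rank_in[OF assms(1) _ assms(2)] del_nth_nths_rank_in[OF assms(1)])

lemma sum_position_pairs_nths:
  assumes "finite A" "A \<subseteq> {..<length xs}"
  shows "(\<Sum>(a, b)\<in>{(a, b). a < b \<and> b < length (nths xs A)}.
            f a b (nths xs A ! a) (nths xs A ! b) (del_nth a (del_nth b (nths xs A))))
       = (\<Sum>(i, j)\<in>ordered_pairs A.
            f (rank_in A i) (rank_in A j) (xs ! i) (xs ! j) (nths xs (A - {i, j})))"
  unfolding length_nths_subset[OF assms(2)] sum_ordered_pairs_card_rank_in[OF assms(1)]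
  by (intro sum.cong refl)
    (auto simp: ordered_pairs_def nth_nths_rank_in[OF assms(1) _ assms(2)]
      del_nth_del_nth_nths_rank_in[OF assms(1)])

lemma ce_diff_nths:
  assumes "finite A" "A \<subseteq> {..<length xs}"
  shows "ce_diff br rho eta (nths xs A)
       = (\<Sum>i\<in>A. sgn_pow (rank_in A i) (rho (xs ! i) (eta (nths xs (A - {i})))))
       + (\<Sum>(i, j)\<in>ordered_pairs A. sgn_pow (rank_in A i + rank_in A j)
            (eta (br (xs ! i) (xs ! j) # nths xs (A - {i, j}))))"
  unfolding ce_diff_def
  using sum_positions_nths[OF assms, of "\<lambda>a x ys. sgn_pow a (rho x (eta ys))"]
    sum_position_pairs_nths[OF assms, of "\<lambda>a b x y ys. sgn_pow (a + b) (eta (br x y # ys))"]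
  by simp

lemma ksubsets_image:
  assumes "inj_on f A"
  shows "ksubsets (f ` A) p = image f ` ksubsets A p"
proof -
  have "card (f ` R) = card R" if "R \<subseteq> A" for R
    using card_image[OF inj_on_subset[OF assms that]] .
  then show ?thesis
    unfolding ksubsets_def by (auto simp: subset_image_iff image_iff)
qed

lemma sum_ksubsets_image:
  assumes "inj_on f A"
  shows "(\<Sum>S\<in>ksubsets (f ` A) p. g S) = (\<Sum>R\<in>ksubsets A p. g (f ` R))"
proof -
  have "inj_on (image f) (ksubsets A p)"
    by (rule inj_on_subset[OF inj_on_image_Pow[OF assms]]) (auto simp: ksubsets_def)
  then show ?thesis unfolding ksubsets_image[OF assms] by (simp add: sum.reindex)
qed

lemma sum_ksubsets_rank_in:
  assumes "finite A"
  shows "(\<Sum>S\<in>ksubsets {..<card A} p. g S) = (\<Sum>S\<in>ksubsets A p. g (rank_in A ` S))"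
proof -
  have "rank_in A ` A = {..<card A}" using bij_betw_rank_in[OF assms] by (simp add: bij_betw_def)
  then show ?thesis using sum_ksubsets_image[OF inj_on_rank_in[OF assms]] by simp
qed

lemma sum_ksubsets_insert:
  assumes "finite B" "a \<notin> B"
  shows "(\<Sum>S\<in>ksubsets (insert a B) p. g S)
       = (if p = 0 then 0 else (\<Sum>R\<in>ksubsets B (p - 1). g (insert a R))) + (\<Sum>R\<in>ksubsets B p. g R)"
proof -
  let ?In = "{S\<in>ksubsets (insert a B) p. a \<in> S}"
  have split: "ksubsets (insert a B) p = ?In \<union> ksubsets B p" "?In \<inter> ksubsets B p = {}"
    using assms(2) by (auto simp: ksubsets_def)
  have In: "?In = (if p = 0 then {} else insert a ` ksubsets B (p - 1))"
  proof (cases "p = 0")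
    case True
    have "S = {}" if "S \<in> ksubsets (insert a B) p" for S
      using that True assms(1) by (auto simp: ksubsets_def dest: finite_subset)
    then show ?thesis using True by auto
  next
    case False
    have into_image: "S \<in> insert a ` ksubsets B (p - 1)" if "S \<in> ?In" for S
    proof -
      have "finite S" using that assms(1) by (auto simp: ksubsets_def intro: finite_subset)
      then have "S - {a} \<in> ksubsets B (p - 1)" using that by (auto simp: ksubsets_def)
      then show ?thesis using that by (auto intro!: image_eqI[of _ _ "S - {a}"])
    qed
    have from_image: "S \<in> ?In" if "S \<in> insert a ` ksubsets B (p - 1)" for S
      using that assms False by (auto simp: ksubsets_def finite_subset card_insert_if)
    have "?In = insert a ` ksubsets B (p - 1)"
      by (rule subset_antisym; rule subsetI) (simp_all only: into_image from_image)
    then show ?thesis using False by simp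
  qed
  have inj: "inj_on (insert a) (ksubsets B (p - 1))"
    using assms(2) by (auto simp: inj_on_def ksubsets_def)
  have "(\<Sum>S\<in>ksubsets (insert a B) p. g S) = sum g (?In \<union> ksubsets B p)"
    by (simp only: split(1)[symmetric])
  also have "\<dots> = sum g ?In + (\<Sum>R\<in>ksubsets B p. g R)"
    by (rule sum.union_disjoint) (use split(2) assms(1) in auto)
  also have "sum g ?In = (if p = 0 then 0 else (\<Sum>R\<in>ksubsets B (p - 1). g (insert a R)))"
    unfolding In using inj by (simp add: sum.reindex)
  finally show ?thesis .
qed

lemma sum_ksubsets_lessThan_Suc:
  "(\<Sum>S\<in>ksubsets {..<Suc m} p. g S)
   = (if p = 0 then 0 else (\<Sum>R\<in>ksubsets {..<m} (p - 1). g (insert 0 (Suc ` R))))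
     + (\<Sum>R\<in>ksubsets {..<m} p. g (Suc ` R))"
  unfolding lessThan_Suc_eq_insert_0
  by (simp add: sum_ksubsets_insert sum_ksubsets_image)

lemma sgn_pow_0 [simp]: "sgn_pow 0 x = x"
  by (simp add: sgn_pow_def)

lemma sgn_pow_zero [simp]: "sgn_pow n 0 = 0"
  by (simp add: sgn_pow_def)

lemma sgn_pow_add_exp: "sgn_pow (a + b) x = sgn_pow a (sgn_pow b x)"
  by (simp add: sgn_pow_def)

lemma sgn_pow_add: "sgn_pow n (x + y) = sgn_pow n x + sgn_pow n y"
  by (simp add: sgn_pow_def)

lemma sgn_pow_diff: "sgn_pow n (x - y) = sgn_pow n x - sgn_pow n y"
  by (simp add: sgn_pow_def)

lemma sgn_pow_sum: "sgn_pow n (\<Sum>i\<in>I. f i) = (\<Sum>i\<in>I. sgn_pow n (f i))"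
  by (simp add: sgn_pow_def sum_negf)

lemma sgn_pow_eq_iff: "sgn_pow n x = sgn_pow n y \<longleftrightarrow> x = y"
  by (simp add: sgn_pow_def)

lemma sgn_pow_cong_parity: "even a = even b \<Longrightarrow> sgn_pow a x = sgn_pow b x"
  by (simp add: sgn_pow_def)

lemma sgn_pow_cong_even_shift: "a + 2 * k = b + 2 * m \<Longrightarrow> sgn_pow a x = sgn_pow b x"
  by (rule sgn_pow_cong_parity) (metis even_add even_mult_iff even_numeral)

lemma (in additive) sgn_pow_commute: "f (sgn_pow n x) = sgn_pow n (f x)"
  by (simp add: sgn_pow_def minus)

lemma triangle_Suc: "Suc p * p div 2 = p * (p - 1) div 2 + p"
proof -
  have "Suc p * p = p * (p - 1) + 2 * p" by (cases p) (simp_all add: algebra_simps)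
  then show ?thesis by simp
qed

section \<open>Shuffle sums\<close>

text \<open>The number of inversions of the shuffle listing the positions in \<open>S\<close> first is
  \<open>(\<Sum>s\<in>S. rank_in A s) - p * (p - 1) div 2\<close>; adding instead of subtracting the
  triangular number keeps the parity and avoids truncated subtraction.\<close>

definition shuffle_sum ::
    "nat set \<Rightarrow> nat \<Rightarrow> ('g list \<Rightarrow> 'g list \<Rightarrow> 'x::ab_group_add) \<Rightarrow> 'g list \<Rightarrow> 'x"
  where "shuffle_sum A p F xs =
    (\<Sum>S\<in>ksubsets A p. sgn_pow ((\<Sum>s\<in>S. rank_in A s) + p * (p - 1) div 2)
       (F (nths xs S) (nths xs (A - S))))"

lemma shuffle_sum_lessThan:
  "shuffle_sum {..<n} p F xs =
    (\<Sum>S\<in>ksubsets {..<n} p. sgn_pow (\<Sum>S + p * (p - 1) div 2)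
       (F (nths xs S) (nths xs ({..<n} - S))))"
  unfolding shuffle_sum_def
  by (intro sum.cong refl arg_cong2[where f=sgn_pow] arg_cong2[where f="(+)"] sum.cong)
    (auto simp: ksubsets_def rank_in_lessThan)

lemma lp_ext_eq_shuffle_sum: "lp_ext alpha p q eta = shuffle_sum {..<p + q} p (\<lambda>ys. alpha q (eta ys))"
  by (rule ext) (simp add: lp_ext_def shuffle_sum_lessThan ksubsets_def)

lemma shuffle_sum_0: "finite A \<Longrightarrow> shuffle_sum A 0 F xs = F [] (nths xs A)"
  by (simp add: shuffle_sum_def ksubsets_0)

lemma shuffle_sum_cong:
  assumes "finite A" "A \<subseteq> {..<length xs}"
    and "\<And>ys zs. length ys = p \<Longrightarrow> length zs = card A - p \<Longrightarrow> F ys zs = G ys zs"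
  shows "shuffle_sum A p F xs = shuffle_sum A p G xs"
  unfolding shuffle_sum_def
proof (intro sum.cong refl arg_cong[where f="sgn_pow _"] assms(3))
  fix S assume "S \<in> ksubsets A p"
  then have S: "S \<subseteq> A" "card S = p" by (auto simp: ksubsets_def)
  then show "length (nths xs S) = p" using assms(2) length_nths_subset[of S xs] by auto
  show "length (nths xs (A - S)) = card A - p"
    using S assms(1,2) length_nths_subset[of "A - S" xs]
    by (auto simp: card_Diff_subset finite_subset)
qed

lemma shuffle_sum_nths:
  assumes "finite A" "A \<subseteq> {..<length xs}"
  shows "shuffle_sum {..<card A} p F (nths xs A) = shuffle_sum A p F xs"
  unfolding shuffle_sum_lessThan sum_ksubsets_rank_in[OF assms(1)] unfolding shuffle_sum_def
proof (rule sum.cong[OF refl])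
  fix S assume "S \<in> ksubsets A p"
  then have S: "S \<subseteq> A" by (simp add: ksubsets_def)
  have "rank_in A ` A = {..<card A}" using bij_betw_rank_in[OF assms(1)] by (simp add: bij_betw_def)
  then have compl: "{..<card A} - rank_in A ` S = rank_in A ` (A - S)"
    using inj_on_image_set_diff[OF inj_on_rank_in[OF assms(1)], of A S] S by auto
  have "\<Sum>(rank_in A ` S) = (\<Sum>s\<in>S. rank_in A s)"
    using sum.reindex[OF inj_on_subset[OF inj_on_rank_in[OF assms(1)] S], of id] by simp
  then show "sgn_pow (\<Sum>(rank_in A ` S) + p * (p - 1) div 2)
      (F (nths (nths xs A) (rank_in A ` S)) (nths (nths xs A) ({..<card A} - rank_in A ` S)))
    = sgn_pow ((\<Sum>s\<in>S. rank_in A s) + p * (p - 1) div 2) (F (nths xs S) (nths xs (A - S)))"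
    unfolding compl using assms(1) S by (simp add: nths_nths_image_rank_in)
qed

lemma nths_Cons_insert_0_Suc: "nths (y # ys) (insert 0 (Suc ` R)) = y # nths ys R"
  by (simp add: nths_Cons inj_image_mem_iff)

lemma nths_Cons_Suc: "nths (y # ys) (Suc ` R) = nths ys R"
  by (simp add: nths_Cons inj_image_mem_iff)

lemma nths_Cons_lessThan_Suc_Diff_Suc:
  "nths (y # ys) ({..<Suc m} - Suc ` R) = y # nths ys ({..<m} - R)"
  by (simp add: nths_Cons inj_image_mem_iff) (rule arg_cong[where f="nths ys"], auto)

lemma nths_Cons_lessThan_Suc_Diff_insert_0_Suc:
  "nths (y # ys) ({..<Suc m} - insert 0 (Suc ` R)) = nths ys ({..<m} - R)"
  by (simp add: nths_Cons inj_image_mem_iff) (rule arg_cong[where f="nths ys"], auto)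

lemma sum_Suc_image: "finite R \<Longrightarrow> \<Sum>(Suc ` R) = \<Sum>R + card R"
proof -
  assume "finite R"
  then have "sum Suc R = \<Sum>R + card R" by (induction rule: finite_induct) auto
  then show ?thesis by (simp add: sum.reindex)
qed

lemma shuffle_sum_Cons:
  "shuffle_sum {..<Suc n} p F (y # ys)
   = (if p = 0 then 0 else shuffle_sum {..<n} (p - 1) (\<lambda>a b. F (y # a) b) ys)
     + sgn_pow p (shuffle_sum {..<n} p (\<lambda>a b. F a (y # b)) ys)"
proof -
  have first: "sgn_pow (\<Sum>(insert 0 (Suc ` R)) + p * (p - 1) div 2) x
      = sgn_pow (\<Sum>R + (p - 1) * (p - 1 - 1) div 2) x"
    if "R \<in> ksubsets {..<n} (p - 1)" "p \<noteq> 0" for R x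
  proof -
    obtain m where p: "p = Suc m" using \<open>p \<noteq> 0\<close> by (cases p) auto
    have "finite R" "card R = m"
      using that(1) by (auto simp: p ksubsets_def intro: finite_subset)
    then have "\<Sum>(insert 0 (Suc ` R)) = \<Sum>R + m" by (simp add: sum_Suc_image)
    moreover have "Suc m * m div 2 = m * (m - 1) div 2 + m" by (rule triangle_Suc)
    ultimately have "\<Sum>(insert 0 (Suc ` R)) + p * (p - 1) div 2
        = (\<Sum>R + (p - 1) * (p - 1 - 1) div 2) + 2 * m"
      unfolding p by simp
    then show ?thesis by (simp add: sgn_pow_cong_parity)
  qed
  have second: "sgn_pow (\<Sum>(Suc ` R) + p * (p - 1) div 2) x
      = sgn_pow p (sgn_pow (\<Sum>R + p * (p - 1) div 2) x)"
    if "R \<in> ksubsets {..<n} p" for R x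
  proof -
    have "finite R" "card R = p"
      using that by (auto simp: ksubsets_def intro: finite_subset)
    then show ?thesis by (simp add: sum_Suc_image ac_simps flip: sgn_pow_add_exp)
  qed
  have "(\<Sum>R\<in>ksubsets {..<n} (p - 1). sgn_pow (\<Sum>(insert 0 (Suc ` R)) + p * (p - 1) div 2)
          (F (nths (y # ys) (insert 0 (Suc ` R))) (nths (y # ys) ({..<Suc n} - insert 0 (Suc ` R)))))
      = shuffle_sum {..<n} (p - 1) (\<lambda>a b. F (y # a) b) ys" if "p \<noteq> 0"
    unfolding shuffle_sum_lessThan
    by (intro sum.cong refl)
      (simp only: first[OF _ that] nths_Cons_insert_0_Suc nths_Cons_lessThan_Suc_Diff_insert_0_Suc)
  moreover have "(\<Sum>R\<in>ksubsets {..<n} p. sgn_pow (\<Sum>(Suc ` R) + p * (p - 1) div 2)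
          (F (nths (y # ys) (Suc ` R)) (nths (y # ys) ({..<Suc n} - Suc ` R))))
      = sgn_pow p (shuffle_sum {..<n} p (\<lambda>a b. F a (y # b)) ys)"
    unfolding shuffle_sum_lessThan sgn_pow_sum
    by (intro sum.cong refl) (simp only: second nths_Cons_Suc nths_Cons_lessThan_Suc_Diff_Suc)
  ultimately show ?thesis
    unfolding shuffle_sum_lessThan[of "Suc n"] sum_ksubsets_lessThan_Suc by simp
qed

lemma (in additive) shuffle_sum_commute:
  "f (shuffle_sum A p F xs) = shuffle_sum A p (\<lambda>a b. f (F a b)) xs"
  by (simp add: shuffle_sum_def sum sgn_pow_commute)

lemma shuffle_sum_del_nth:
  assumes "length xs = Suc m" "i < Suc m"
  shows "shuffle_sum {..<m} p F (del_nth i xs) = shuffle_sum ({..<Suc m} - {i}) p F xs"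
proof -
  have "card ({..<Suc m} - {i}) = m" using assms(2) by simp
  then show ?thesis
    using shuffle_sum_nths[of "{..<Suc m} - {i}" xs p F] assms
    by (simp add: del_nth_eq_nths_lessThan)
qed

lemma shuffle_sum_Cons_del_nth_del_nth:
  assumes "length xs = Suc (Suc m)" "i < j" "j < Suc (Suc m)"
  shows "shuffle_sum {..<Suc m} p F (y # del_nth i (del_nth j xs))
   = (if p = 0 then 0 else shuffle_sum ({..<Suc (Suc m)} - {i, j}) (p - 1) (\<lambda>a b. F (y # a) b) xs)
     + sgn_pow p (shuffle_sum ({..<Suc (Suc m)} - {i, j}) p (\<lambda>a b. F a (y # b)) xs)"
proof -
  let ?A = "{..<Suc (Suc m)} - {i, j}"
  have A: "finite ?A" "?A \<subseteq> {..<length xs}" "card ?A = m" using assms by auto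
  have del: "del_nth i (del_nth j xs) = nths xs ?A"
    using del_nth_del_nth_nths_rank_in[of "{..<Suc (Suc m)}" i j xs] assms
    by (simp add: rank_in_lessThan nths_all)
  have nths_A: "shuffle_sum {..<m} r H (nths xs ?A) = shuffle_sum ?A r H xs" for r H
    using shuffle_sum_nths[OF A(1,2)] A(3) by simp
  show ?thesis
    unfolding del shuffle_sum_Cons nths_A ..
qed

lemma sum_ksubsets_Suc_members:
  assumes "finite N"
  shows "(\<Sum>T\<in>ksubsets N (Suc p). \<Sum>t\<in>T. f T t) = (\<Sum>S\<in>ksubsets N p. \<Sum>i\<in>N - S. f (insert i S) i)"
proof -
  have fin: "finite S" if "S \<in> ksubsets N k" for S k
    using finite_if_in_ksubsets[OF assms that] .
  have "(\<Sum>S\<in>ksubsets N p. \<Sum>i\<in>N - S. f (insert i S) i)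
      = (\<Sum>(S, i)\<in>(SIGMA S:ksubsets N p. N - S). f (insert i S) i)"
    by (rule sum.Sigma) (simp_all add: assms)
  also have "\<dots> = (\<Sum>(T, t)\<in>(SIGMA T:ksubsets N (Suc p). T). f T t)"
    by (rule sum.reindex_bij_witness[where j="\<lambda>(S, i). (insert i S, i)"
          and i="\<lambda>(T, t). (T - {t}, t)"])
      (auto simp: ksubsets_def card_insert_if finite_subset[OF _ assms] dest: fin)
  also have "\<dots> = (\<Sum>T\<in>ksubsets N (Suc p). \<Sum>t\<in>T. f T t)"
    by (rule sum.Sigma[symmetric]) (auto simp: assms dest: fin)
  finally show ?thesis ..
qed

lemma sum_ksubsets_Suc_Suc_ordered_pairs:
  assumes "finite N"
  shows "(\<Sum>T\<in>ksubsets N (Suc (Suc r)). \<Sum>(s, t)\<in>ordered_pairs T. f T s t)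
       = (\<Sum>(i, j)\<in>ordered_pairs N. \<Sum>S\<in>ksubsets (N - {i, j}) r. f (insert i (insert j S)) i j)"
proof -
  have fin: "finite S" if "S \<subseteq> N - X" for S X
    using that assms by (auto intro: finite_subset)
  have reinsert: "insert s (insert t (T - {s, t})) = T" if "s \<in> T" "t \<in> T" for s t T
    using that by auto
  have "(\<Sum>T\<in>ksubsets N (Suc (Suc r)). \<Sum>(s, t)\<in>ordered_pairs T. f T s t)
      = (\<Sum>(T, st)\<in>(SIGMA T:ksubsets N (Suc (Suc r)). ordered_pairs T). f T (fst st) (snd st))"
    by (subst sum.Sigma) (auto simp: assms split_beta ksubsets_def finite_subset[OF _ assms])
  also have "\<dots> = (\<Sum>(st, S)\<in>(SIGMA st:ordered_pairs N. ksubsets (N - {fst st, snd st}) r).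
      f (insert (fst st) (insert (snd st) S)) (fst st) (snd st))"
    by (rule sum.reindex_bij_witness[where i="\<lambda>(st, S). (insert (fst st) (insert (snd st) S), st)"
          and j="\<lambda>(T, st). (st, T - {fst st, snd st})"])
      (auto simp: ksubsets_def ordered_pairs_def card_insert_if fin reinsert)
  also have "\<dots> = (\<Sum>(i, j)\<in>ordered_pairs N. \<Sum>S\<in>ksubsets (N - {i, j}) r. f (insert i (insert j S)) i j)"
    by (subst sum.Sigma[symmetric]) (auto simp: assms split_beta)
  finally show ?thesis .
qed

lemma sum_ksubsets_complement_swap:
  assumes "finite N"
  shows "(\<Sum>S\<in>ksubsets N p. \<Sum>i\<in>N - S. g S i) = (\<Sum>i\<in>N. \<Sum>S\<in>ksubsets (N - {i}) p. g S i)"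
proof -
  have "(\<Sum>S\<in>ksubsets N p. \<Sum>i\<in>N - S. g S i) = (\<Sum>S\<in>ksubsets N p. \<Sum>i\<in>{i\<in>N. i \<notin> S}. g S i)"
    by (intro sum.cong) auto
  also have "\<dots> = (\<Sum>i\<in>N. \<Sum>S\<in>{S\<in>ksubsets N p. i \<notin> S}. g S i)"
    by (rule sum.swap_restrict) (simp_all add: assms)
  also have "\<dots> = (\<Sum>i\<in>N. \<Sum>S\<in>ksubsets (N - {i}) p. g S i)"
    by (intro sum.cong refl arg_cong[where f="\<lambda>X. sum _ X"]) (auto simp: ksubsets_def)
  finally show ?thesis .
qed

lemma sum_ksubsets_ordered_pairs_complement_swap:
  assumes "finite N"
  shows "(\<Sum>S\<in>ksubsets N p. \<Sum>(i, j)\<in>ordered_pairs (N - S). g S i j)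
       = (\<Sum>(i, j)\<in>ordered_pairs N. \<Sum>S\<in>ksubsets (N - {i, j}) p. g S i j)"
proof -
  have "(\<Sum>S\<in>ksubsets N p. \<Sum>(i, j)\<in>ordered_pairs (N - S). g S i j)
      = (\<Sum>S\<in>ksubsets N p. \<Sum>ij\<in>{ij\<in>ordered_pairs N. fst ij \<notin> S \<and> snd ij \<notin> S}. g S (fst ij) (snd ij))"
    by (intro sum.cong) (auto simp: ordered_pairs_def split_beta)
  also have "\<dots> = (\<Sum>ij\<in>ordered_pairs N.
      \<Sum>S\<in>{S\<in>ksubsets N p. fst ij \<notin> S \<and> snd ij \<notin> S}. g S (fst ij) (snd ij))"
    by (rule sum.swap_restrict) (simp_all add: assms)
  also have "\<dots> = (\<Sum>(i, j)\<in>ordered_pairs N. \<Sum>S\<in>ksubsets (N - {i, j}) p. g S i j)"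
    by (intro sum.cong refl) (auto simp: ksubsets_def split_beta intro!: sum.cong)
  finally show ?thesis .
qed

text \<open>The Leibniz rule pairs off four families of terms: one or two distinguished arguments
  either leave the \<open>p\<close>-part of a shuffle or are singled out before shuffling the rest. The
  summand lemmas compare the Koszul signs of the two descriptions of each term.\<close>

lemma shuffle_summand_member_to_complement:
  assumes "S \<in> ksubsets {..<n} p" "i \<in> {..<n} - S"
  shows "sgn_pow (\<Sum>(insert i S) + Suc p * p div 2)
           (sgn_pow (rank_in (insert i S) i)
             (F i (nths xs (insert i S - {i})) (nths xs ({..<n} - insert i S))))
       = sgn_pow (p + (\<Sum>S + p * (p - 1) div 2))
           (sgn_pow (rank_in ({..<n} - S) i) (F i (nths xs S) (nths xs ({..<n} - S - {i}))))"
proof -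
  have fin: "finite S" using assms(1) finite_subset by (auto simp: ksubsets_def)
  have sets: "insert i S - {i} = S" "{..<n} - insert i S = {..<n} - S - {i}" using assms(2) by auto
  define c where "c = p * (p - 1) div 2"
  have "\<Sum>(insert i S) = i + \<Sum>S" using fin assms(2) by simp
  moreover have "rank_in ({..<n} - S) i + card {s\<in>S. s < i} = i"
    using assms(2) by (intro rank_in_lessThan_Diff) auto
  moreover have "rank_in (insert i S) i = card {s\<in>S. s < i}"
    using assms(2) by (simp add: rank_in_insert_self)
  ultimately show ?thesis
    unfolding sets sgn_pow_add_exp[symmetric] triangle_Suc c_def[symmetric]
    by (intro sgn_pow_cong_even_shift[where k=0 and m="card {s\<in>S. s < i}"]) simp
qed

lemma shuffle_summand_complement_index:
  assumes "i \<in> {..<n}" "S \<in> ksubsets ({..<n} - {i}) p"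
  shows "sgn_pow (p + (\<Sum>S + p * (p - 1) div 2))
           (sgn_pow (rank_in ({..<n} - S) i) (F i (nths xs S) (nths xs ({..<n} - S - {i}))))
       = sgn_pow i (sgn_pow ((\<Sum>s\<in>S. rank_in ({..<n} - {i}) s) + p * (p - 1) div 2)
           (F i (nths xs S) (nths xs ({..<n} - {i} - S))))"
proof -
  have S: "S \<subseteq> {..<n} - {i}" "card S = p" using assms(2) by (auto simp: ksubsets_def)
  have fin: "finite S" using S(1) finite_subset by blast
  have sets: "{..<n} - S - {i} = {..<n} - {i} - S" by auto
  define c where "c = p * (p - 1) div 2"
  have "rank_in ({..<n} - S) i + card {s\<in>S. s < i} = i"
    using assms S by (intro rank_in_lessThan_Diff) auto
  moreover have "(\<Sum>s\<in>S. rank_in ({..<n} - {i}) s) + card {s\<in>S. i < s} = \<Sum>S"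
    using sum_rank_in_lessThan_Diff[OF fin _ S(1)] by simp
  moreover have "card {s\<in>S. s < i} + card {s\<in>S. i < s} = p"
    using card_less_plus_card_greater[OF fin] S by auto
  ultimately show ?thesis
    unfolding sets sgn_pow_add_exp[symmetric] c_def[symmetric]
    by (intro sgn_pow_cong_even_shift[where k=0 and m="card {s\<in>S. i < s}"]) simp
qed

lemma shuffle_summand_member_pairs:
  assumes "(i, j) \<in> ordered_pairs {..<n}" "S \<in> ksubsets ({..<n} - {i, j}) r"
  shows "sgn_pow (\<Sum>(insert i (insert j S)) + Suc (Suc r) * Suc r div 2)
           (sgn_pow (rank_in (insert i (insert j S)) i + rank_in (insert i (insert j S)) j)
             (F i j (nths xs (insert i (insert j S) - {i, j}))
               (nths xs ({..<n} - insert i (insert j S)))))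
       = sgn_pow (i + j) (sgn_pow ((\<Sum>s\<in>S. rank_in ({..<n} - {i, j}) s) + r * (r - 1) div 2)
           (F i j (nths xs S) (nths xs ({..<n} - {i, j} - S))))"
proof -
  have ij: "i < j" "j < n" using assms(1) by (auto simp: ordered_pairs_def)
  have S: "S \<subseteq> {..<n} - {i, j}" "card S = r" using assms(2) by (auto simp: ksubsets_def)
  have fin: "finite S" using S(1) finite_subset by blast
  have notin: "i \<notin> S" "j \<notin> S" using S(1) by auto
  have sets: "insert i (insert j S) - {i, j} = S"
      "{..<n} - insert i (insert j S) = {..<n} - {i, j} - S"
    using notin by auto
  define ai aj bi bj where "ai = card {s\<in>S. s < i}" and "aj = card {s\<in>S. s < j}"
    and "bi = card {s\<in>S. i < s}" and "bj = card {s\<in>S. j < s}"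
  define c where "c = r * (r - 1) div 2"
  have "\<Sum>(insert i (insert j S)) = i + j + \<Sum>S" using fin notin ij by simp
  moreover have "rank_in (insert i (insert j S)) i = ai"
    unfolding rank_in_def ai_def by (rule arg_cong[where f=card]) (use ij in auto)
  moreover have "rank_in (insert i (insert j S)) j = Suc aj"
  proof -
    have "{k\<in>insert i (insert j S). k < j} = insert i {s\<in>S. s < j}" using ij by auto
    then show ?thesis unfolding rank_in_def aj_def using fin notin by simp
  qed
  moreover have "(\<Sum>s\<in>S. rank_in ({..<n} - {i, j}) s) + (bi + bj) = \<Sum>S"
    using sum_rank_in_lessThan_Diff[OF fin _ S(1)] ij unfolding bi_def bj_def by simp
  moreover have "ai + bi = r" "aj + bj = r"
    using card_less_plus_card_greater[OF fin] notin S unfolding ai_def aj_def bi_def bj_def by auto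
  moreover have "Suc (Suc r) * Suc r div 2 = c + r + Suc r"
    using triangle_Suc[of "Suc r"] triangle_Suc[of r] unfolding c_def by simp
  ultimately show ?thesis
    unfolding sets sgn_pow_add_exp[symmetric] c_def[symmetric]
    by (intro sgn_pow_cong_even_shift[where k=0 and m="2 * r + 1"]) simp
qed

lemma shuffle_summand_complement_pairs:
  assumes "(i, j) \<in> ordered_pairs {..<n}" "S \<in> ksubsets ({..<n} - {i, j}) p"
  shows "sgn_pow (p + (\<Sum>S + p * (p - 1) div 2))
           (sgn_pow (rank_in ({..<n} - S) i + rank_in ({..<n} - S) j)
             (F i j (nths xs S) (nths xs ({..<n} - S - {i, j}))))
       = sgn_pow (i + j) (sgn_pow p (sgn_pow ((\<Sum>s\<in>S. rank_in ({..<n} - {i, j}) s) + p * (p - 1) div 2)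
           (F i j (nths xs S) (nths xs ({..<n} - {i, j} - S)))))"
proof -
  have ij: "i < j" "j < n" using assms(1) by (auto simp: ordered_pairs_def)
  have S: "S \<subseteq> {..<n} - {i, j}" "card S = p" using assms(2) by (auto simp: ksubsets_def)
  have fin: "finite S" using S(1) finite_subset by blast
  have notin: "i \<notin> S" "j \<notin> S" using S(1) by auto
  have sets: "{..<n} - S - {i, j} = {..<n} - {i, j} - S" by auto
  define ai aj bi bj where "ai = card {s\<in>S. s < i}" and "aj = card {s\<in>S. s < j}"
    and "bi = card {s\<in>S. i < s}" and "bj = card {s\<in>S. j < s}"
  define c where "c = p * (p - 1) div 2"
  have "rank_in ({..<n} - S) i + ai = i" "rank_in ({..<n} - S) j + aj = j"
    unfolding ai_def aj_def using ij by (auto intro!: rank_in_lessThan_Diff)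
  moreover have "(\<Sum>s\<in>S. rank_in ({..<n} - {i, j}) s) + (bi + bj) = \<Sum>S"
    using sum_rank_in_lessThan_Diff[OF fin _ S(1)] ij unfolding bi_def bj_def by simp
  moreover have "ai + bi = p" "aj + bj = p"
    using card_less_plus_card_greater[OF fin] notin S unfolding ai_def aj_def bi_def bj_def by auto
  ultimately show ?thesis
    unfolding sets sgn_pow_add_exp[symmetric] c_def[symmetric]
    by (intro sgn_pow_cong_even_shift[where k="ai + aj" and m=p]) simp
qed

lemma shuffle_resum_member_to_complement:
  "(\<Sum>T\<in>ksubsets {..<n} (Suc p). \<Sum>t\<in>T. sgn_pow (\<Sum>T + Suc p * p div 2)
      (sgn_pow (rank_in T t) (F t (nths xs (T - {t})) (nths xs ({..<n} - T)))))
   = (\<Sum>S\<in>ksubsets {..<n} p. \<Sum>i\<in>{..<n} - S. sgn_pow (p + (\<Sum>S + p * (p - 1) div 2))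
      (sgn_pow (rank_in ({..<n} - S) i) (F i (nths xs S) (nths xs ({..<n} - S - {i})))))"
  unfolding sum_ksubsets_Suc_members[OF finite_lessThan]
  by (intro sum.cong refl) (simp only: shuffle_summand_member_to_complement)

lemma shuffle_resum_complement_index:
  "(\<Sum>S\<in>ksubsets {..<n} p. \<Sum>i\<in>{..<n} - S. sgn_pow (p + (\<Sum>S + p * (p - 1) div 2))
      (sgn_pow (rank_in ({..<n} - S) i) (F i (nths xs S) (nths xs ({..<n} - S - {i})))))
   = (\<Sum>i<n. sgn_pow i (shuffle_sum ({..<n} - {i}) p (F i) xs))"
  unfolding sum_ksubsets_complement_swap[OF finite_lessThan] shuffle_sum_def sgn_pow_sum
  by (intro sum.cong refl) (simp only: shuffle_summand_complement_index)

lemma shuffle_resum_member_pairs: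
  "(\<Sum>T\<in>ksubsets {..<n} (Suc p). \<Sum>(s, t)\<in>ordered_pairs T. sgn_pow (\<Sum>T + Suc p * p div 2)
      (sgn_pow (rank_in T s + rank_in T t) (F s t (nths xs (T - {s, t})) (nths xs ({..<n} - T)))))
   = (\<Sum>(i, j)\<in>ordered_pairs {..<n}.
        sgn_pow (i + j) (if p = 0 then 0 else shuffle_sum ({..<n} - {i, j}) (p - 1) (F i j) xs))"
proof (cases p)
  case 0
  have "ordered_pairs T = {}" if "card T = 1" for T :: "nat set"
    using that by (auto simp: ordered_pairs_def card_1_singleton_iff)
  then show ?thesis using 0 by (simp add: ksubsets_def)
next
  case (Suc r)
  show ?thesis
    unfolding Suc sum_ksubsets_Suc_Suc_ordered_pairs[OF finite_lessThan]
    by (intro sum.cong refl, clarify)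
      (simp only: prod.case Suc_not_Zero if_False diff_Suc_1 shuffle_sum_def sgn_pow_sum
        shuffle_summand_member_pairs cong: sum.cong)
qed

lemma shuffle_resum_complement_pairs:
  "(\<Sum>S\<in>ksubsets {..<n} p. \<Sum>(i, j)\<in>ordered_pairs ({..<n} - S). sgn_pow (p + (\<Sum>S + p * (p - 1) div 2))
      (sgn_pow (rank_in ({..<n} - S) i + rank_in ({..<n} - S) j)
        (F i j (nths xs S) (nths xs ({..<n} - S - {i, j})))))
   = (\<Sum>(i, j)\<in>ordered_pairs {..<n}.
        sgn_pow (i + j) (sgn_pow p (shuffle_sum ({..<n} - {i, j}) p (F i j) xs)))"
  unfolding sum_ksubsets_ordered_pairs_complement_swap[OF finite_lessThan]
  by (intro sum.cong refl, clarify)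
    (simp only: prod.case shuffle_sum_def sgn_pow_sum shuffle_summand_complement_pairs cong: sum.cong)

section \<open>The Leibniz rule for shuffle sums\<close>

text \<open>\<open>lp_defect br rho Phi v\<close> is the Chevalley--Eilenberg differential of the
  \<open>g\<close>-valued cochain \<open>Phi v\<close>, minus the terms in which an argument acts on \<open>v\<close>.\<close>

definition lp_defect :: "('g \<Rightarrow> 'g \<Rightarrow> 'g) \<Rightarrow> ('g \<Rightarrow> 'v \<Rightarrow> 'v) \<Rightarrow> ('v \<Rightarrow> 'g list \<Rightarrow> 'g)
    \<Rightarrow> 'v \<Rightarrow> 'g list \<Rightarrow> 'g::ab_group_add" where
  "lp_defect br rho Phi v zs =
     (\<Sum>i<length zs.
        sgn_pow i (br (zs ! i) (Phi v (del_nth i zs)) - Phi (rho (zs ! i) v) (del_nth i zs)))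
     + (\<Sum>(i, j)\<in>{(i, j). i < j \<and> j < length zs}.
          sgn_pow (i + j) (Phi v (br (zs ! i) (zs ! j) # del_nth i (del_nth j zs))))"

lemma lp_defect_nths:
  assumes "finite A" "A \<subseteq> {..<length xs}"
  shows "lp_defect br rho Phi v (nths xs A)
       = (\<Sum>i\<in>A. sgn_pow (rank_in A i)
            (br (xs ! i) (Phi v (nths xs (A - {i}))) - Phi (rho (xs ! i) v) (nths xs (A - {i}))))
       + (\<Sum>(i, j)\<in>ordered_pairs A. sgn_pow (rank_in A i + rank_in A j)
            (Phi v (br (xs ! i) (xs ! j) # nths xs (A - {i, j}))))"
  unfolding lp_defect_def
  using sum_positions_nths[OF assms, of "\<lambda>a x ys. sgn_pow a (br x (Phi v ys) - Phi (rho x v) ys)"]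
    sum_position_pairs_nths[OF assms, of "\<lambda>a b x y ys. sgn_pow (a + b) (Phi v (br x y # ys))"]
  by simp

lemma lp_defect_eq_0:
  assumes "\<And>x. additive (br x)" "\<And>v zs. Phi v zs = 0"
  shows "lp_defect br rho Phi v zs = 0"
  using additive.zero[OF assms(1)] by (simp add: lp_defect_def assms(2))

lemma shuffle_sum_lp_defect:
  fixes p q :: nat and N :: "nat set"
  defines "N \<equiv> {..<Suc (p + q)}"
  assumes "length xs = Suc (p + q)"
  shows "sgn_pow p (shuffle_sum N p (\<lambda>ys. lp_defect br rho Phi (eta ys)) xs)
   = (\<Sum>S\<in>ksubsets N p. \<Sum>i\<in>N - S. sgn_pow (p + (\<Sum>S + p * (p - 1) div 2))
        (sgn_pow (rank_in (N - S) i) (br (xs ! i) (Phi (eta (nths xs S)) (nths xs (N - S - {i}))))))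
   - (\<Sum>S\<in>ksubsets N p. \<Sum>i\<in>N - S. sgn_pow (p + (\<Sum>S + p * (p - 1) div 2))
        (sgn_pow (rank_in (N - S) i) (Phi (rho (xs ! i) (eta (nths xs S))) (nths xs (N - S - {i})))))
   + (\<Sum>S\<in>ksubsets N p. \<Sum>(i, j)\<in>ordered_pairs (N - S). sgn_pow (p + (\<Sum>S + p * (p - 1) div 2))
        (sgn_pow (rank_in (N - S) i + rank_in (N - S) j)
          (Phi (eta (nths xs S)) (br (xs ! i) (xs ! j) # nths xs (N - S - {i, j})))))"
proof -
  have complement: "finite (N - S)" "N - S \<subseteq> {..<length xs}" for S
    using assms(2) unfolding N_def by auto
  show ?thesis
    unfolding N_def shuffle_sum_lessThan sgn_pow_sum sgn_pow_add_exp[symmetric]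
    unfolding N_def[symmetric] lp_defect_nths[OF complement]
    by (simp add: sgn_pow_add sgn_pow_diff sgn_pow_sum sum_subtractf sum.distrib
        sgn_pow_add_exp[symmetric] case_prod_beta)
qed

lemma ce_diff_shuffle_sum:
  fixes p q :: nat and N :: "nat set"
  defines "N \<equiv> {..<Suc (p + q)}"
  assumes br: "\<And>x. additive (br x)" and len: "length xs = Suc (p + q)"
  shows "ce_diff br br (shuffle_sum {..<p + q} p G) xs
   = (\<Sum>i<Suc (p + q). sgn_pow i (shuffle_sum (N - {i}) p (\<lambda>a b. br (xs ! i) (G a b)) xs))
   + (\<Sum>(i, j)\<in>ordered_pairs N. sgn_pow (i + j)
        (if p = 0 then 0 else shuffle_sum (N - {i, j}) (p - 1)
            (\<lambda>a b. G (br (xs ! i) (xs ! j) # a) b) xs))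
   + (\<Sum>(i, j)\<in>ordered_pairs N. sgn_pow (i + j)
        (sgn_pow p (shuffle_sum (N - {i, j}) p (\<lambda>a b. G a (br (xs ! i) (xs ! j) # b)) xs)))"
proof -
  have single: "br (xs ! i) (shuffle_sum {..<p + q} p G (del_nth i xs))
      = shuffle_sum (N - {i}) p (\<lambda>a b. br (xs ! i) (G a b)) xs" if "i < Suc (p + q)" for i
    unfolding N_def additive.shuffle_sum_commute[OF br] using shuffle_sum_del_nth[OF len that] .
  have pair: "shuffle_sum {..<p + q} p G (br (xs ! i) (xs ! j) # del_nth i (del_nth j xs))
      = (if p = 0 then 0 else shuffle_sum (N - {i, j}) (p - 1)
          (\<lambda>a b. G (br (xs ! i) (xs ! j) # a) b) xs)
        + sgn_pow p (shuffle_sum (N - {i, j}) p (\<lambda>a b. G a (br (xs ! i) (xs ! j) # b)) xs)"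
    if "(i, j) \<in> ordered_pairs N" for i j
  proof -
    have "i < j" "j < Suc (p + q)" using that unfolding N_def ordered_pairs_def by auto
    then obtain m where m: "p + q = Suc m" by (cases "p + q") auto
    show ?thesis
      using shuffle_sum_Cons_del_nth_del_nth[of xs m i j p G] that len
      unfolding N_def m by (simp add: ordered_pairs_def)
  qed
  have "(\<Sum>i\<in>N. sgn_pow i (br (xs ! i) (shuffle_sum {..<p + q} p G (del_nth i xs))))
      = (\<Sum>i\<in>N. sgn_pow i (shuffle_sum (N - {i}) p (\<lambda>a b. br (xs ! i) (G a b)) xs))"
    by (rule sum.cong[OF refl]) (simp add: single N_def)
  moreover have "(\<Sum>(i, j)\<in>ordered_pairs N. sgn_pow (i + j)
        (shuffle_sum {..<p + q} p G (br (xs ! i) (xs ! j) # del_nth i (del_nth j xs))))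
      = (\<Sum>(i, j)\<in>ordered_pairs N. sgn_pow (i + j)
          (if p = 0 then 0 else shuffle_sum (N - {i, j}) (p - 1)
              (\<lambda>a b. G (br (xs ! i) (xs ! j) # a) b) xs))
      + (\<Sum>(i, j)\<in>ordered_pairs N. sgn_pow (i + j)
          (sgn_pow p (shuffle_sum (N - {i, j}) p (\<lambda>a b. G a (br (xs ! i) (xs ! j) # b)) xs)))"
    unfolding sum.distrib[symmetric]
    by (rule sum.cong[OF refl]) (clarsimp simp: pair sgn_pow_add)
  ultimately show ?thesis
    unfolding ce_diff_def len ordered_pairs_lessThan[symmetric] N_def[symmetric]
    by (simp only: add.assoc)
qed

text \<open>The data in a single degree \<open>q\<close>: the module \<open>M = V\<^sup>q\<close> with action \<open>rho\<close>,
  and \<open>Phi = alpha\<^sub>q\<close>.\<close>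

locale lp_degree =
  fixes br :: "'g::ab_group_add \<Rightarrow> 'g \<Rightarrow> 'g" and rho :: "'g \<Rightarrow> 'v::ab_group_add \<Rightarrow> 'v"
    and Phi :: "'v \<Rightarrow> 'g list \<Rightarrow> 'g" and M :: "'v set" and q :: nat
  assumes additive_br: "additive (br x)"
    and Phi_add: "v \<in> M \<Longrightarrow> w \<in> M \<Longrightarrow> length zs = q \<Longrightarrow> Phi (v + w) zs = Phi v zs + Phi w zs"
    and zero_mem: "0 \<in> M"
    and add_mem: "v \<in> M \<Longrightarrow> w \<in> M \<Longrightarrow> v + w \<in> M"
    and uminus_mem: "v \<in> M \<Longrightarrow> - v \<in> M"
    and rho_mem: "v \<in> M \<Longrightarrow> rho x v \<in> M"
begin

lemma sum_mem: "(\<And>i. i \<in> I \<Longrightarrow> f i \<in> M) \<Longrightarrow> (\<Sum>i\<in>I. f i) \<in> M"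
  by (induction I rule: infinite_finite_induct) (auto simp: zero_mem add_mem)

lemma sgn_pow_mem: "v \<in> M \<Longrightarrow> sgn_pow n v \<in> M"
  by (simp add: sgn_pow_def uminus_mem)

lemma Phi_zero: "length zs = q \<Longrightarrow> Phi 0 zs = 0"
  using Phi_add[OF zero_mem zero_mem] by simp

lemma Phi_sgn_pow: "v \<in> M \<Longrightarrow> length zs = q \<Longrightarrow> Phi (sgn_pow n v) zs = sgn_pow n (Phi v zs)"
  using Phi_add[OF uminus_mem, of v v zs] Phi_zero by (simp add: sgn_pow_def eq_neg_iff_add_eq_0)

lemma Phi_sum:
  "(\<And>i. i \<in> I \<Longrightarrow> f i \<in> M) \<Longrightarrow> length zs = q \<Longrightarrow> Phi (\<Sum>i\<in>I. f i) zs = (\<Sum>i\<in>I. Phi (f i) zs)"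
proof (induction I rule: infinite_finite_induct)
  case (insert x F)
  then show ?case using Phi_add[of "f x" "sum f F" zs] sum_mem[of F f] by auto
qed (auto simp: Phi_zero)

lemma Phi_ce_diff_nths:
  assumes eta: "\<forall>ys. length ys = p \<longrightarrow> eta ys \<in> M"
    and T: "T \<subseteq> {..<length xs}" "card T = Suc p" and zs: "length zs = q"
  shows "Phi (ce_diff br rho eta (nths xs T)) zs
       = (\<Sum>t\<in>T. sgn_pow (rank_in T t) (Phi (rho (xs ! t) (eta (nths xs (T - {t})))) zs))
       + (\<Sum>(s, t)\<in>ordered_pairs T. sgn_pow (rank_in T s + rank_in T t)
            (Phi (eta (br (xs ! s) (xs ! t) # nths xs (T - {s, t}))) zs))"
proof -
  have fin: "finite T" using T(1) finite_subset by blast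
  have single: "rho (xs ! t) (eta (nths xs (T - {t}))) \<in> M" if "t \<in> T" for t
    using that T fin eta by (intro rho_mem) (simp add: length_nths_subset subset_iff)
  have pair: "eta (br (xs ! s) (xs ! t) # nths xs (T - {s, t})) \<in> M"
    if "(s, t) \<in> ordered_pairs T" for s t
  proof -
    have st: "s \<in> T" "t \<in> T" "s < t" using that by (auto simp: ordered_pairs_def)
    have "2 \<le> card T" using card_mono[OF fin, of "{s, t}"] st by simp
    moreover have "length (nths xs (T - {s, t})) = card T - 2"
      using T(1) st fin by (subst length_nths_subset) (auto simp: card_Diff_subset)
    ultimately show ?thesis using T(2) eta by simp
  qed
  show ?thesis
    unfolding ce_diff_nths[OF fin T(1)]
    by (simp add: Phi_add Phi_sum Phi_sgn_pow sum_mem sgn_pow_mem single pair zs split_beta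
        cong: sum.cong)
qed

lemma shuffle_sum_ce_diff:
  assumes eta: "\<forall>ys. length ys = p \<longrightarrow> eta ys \<in> M" and len: "length xs = Suc (p + q)"
  shows "shuffle_sum {..<Suc (p + q)} (Suc p) (\<lambda>ys. Phi (ce_diff br rho eta ys)) xs
   = (\<Sum>T\<in>ksubsets {..<Suc (p + q)} (Suc p). \<Sum>t\<in>T. sgn_pow (\<Sum>T + Suc p * p div 2)
        (sgn_pow (rank_in T t) (Phi (rho (xs ! t) (eta (nths xs (T - {t})))) (nths xs ({..<Suc (p + q)} - T)))))
   + (\<Sum>T\<in>ksubsets {..<Suc (p + q)} (Suc p). \<Sum>(s, t)\<in>ordered_pairs T. sgn_pow (\<Sum>T + Suc p * p div 2)
        (sgn_pow (rank_in T s + rank_in T t)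
          (Phi (eta (br (xs ! s) (xs ! t) # nths xs (T - {s, t}))) (nths xs ({..<Suc (p + q)} - T)))))"
proof -
  have T: "T \<subseteq> {..<length xs}" "card T = Suc p" "length (nths xs ({..<Suc (p + q)} - T)) = q"
    if "T \<in> ksubsets {..<Suc (p + q)} (Suc p)" for T
  proof -
    have sub: "T \<subseteq> {..<length xs}" and card: "card T = Suc p"
      using that len by (auto simp: ksubsets_def)
    then show "T \<subseteq> {..<length xs}" "card T = Suc p" by auto
    have "card ({..<Suc (p + q)} - T) = q"
      using sub card len by (simp add: card_Diff_subset finite_subset)
    then show "length (nths xs ({..<Suc (p + q)} - T)) = q"
      using len length_nths_subset[of "{..<Suc (p + q)} - T" xs] by auto
  qed
  show ?thesis
    unfolding shuffle_sum_lessThan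
    by (simp add: Phi_ce_diff_nths[OF eta] T sgn_pow_add sgn_pow_sum sum.distrib split_beta
        cong: sum.cong)
qed

lemma ce_diff_shuffle_sum_Leibniz:
  assumes eta: "\<forall>ys. length ys = p \<longrightarrow> eta ys \<in> M" and len: "length xs = Suc (p + q)"
  shows "ce_diff br br (shuffle_sum {..<p + q} p (\<lambda>ys. Phi (eta ys))) xs
       = shuffle_sum {..<Suc (p + q)} (Suc p) (\<lambda>ys. Phi (ce_diff br rho eta ys)) xs
         + sgn_pow p (shuffle_sum {..<Suc (p + q)} p (\<lambda>ys. lp_defect br rho Phi (eta ys)) xs)"
  unfolding ce_diff_shuffle_sum[OF additive_br len] shuffle_sum_ce_diff[OF eta len]
    shuffle_sum_lp_defect[OF len]
  unfolding shuffle_resum_member_to_complement[where F="\<lambda>t a. Phi (rho (xs ! t) (eta a))"]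
    shuffle_resum_member_pairs[where F="\<lambda>s t a b. Phi (eta (br (xs ! s) (xs ! t) # a)) b"]
    shuffle_resum_complement_index[where F="\<lambda>i a b. br (xs ! i) (Phi (eta a) b)"]
    shuffle_resum_complement_pairs[where F="\<lambda>i j a b. Phi (eta a) (br (xs ! i) (xs ! j) # b)"]
  by (simp add: algebra_simps)

lemma lp_equation_iff_defect:
  assumes eta: "\<forall>ys. length ys = p \<longrightarrow> eta ys \<in> M" and len: "length xs = Suc (p + q)"
  shows "shuffle_sum {..<Suc (p + q)} (Suc p) (\<lambda>ys. Phi (ce_diff br rho eta ys)) xs
           + sgn_pow p (shuffle_sum {..<Suc (p + q)} p F xs)
         = ce_diff br br (shuffle_sum {..<p + q} p (\<lambda>ys. Phi (eta ys))) xs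
     \<longleftrightarrow> shuffle_sum {..<Suc (p + q)} p F xs
         = shuffle_sum {..<Suc (p + q)} p (\<lambda>ys. lp_defect br rho Phi (eta ys)) xs"
  by (simp add: ce_diff_shuffle_sum_Leibniz[OF eta len] sgn_pow_eq_iff)

end

section \<open>Dg Loday--Pirashvili modules\<close>

lemma lp_degree_if_lp_family:
  assumes la: "lie_algebra sc br" and dg: "dg_module sc br scv V act d"
    and lpf: "lp_family sc scv V u alpha"
  shows "lp_degree br (act k) (alpha k) (V k) k"
proof -
  have sc1: "sc 1 y = y" for y
    using la vector_space.vector_space_assms(4) by (auto simp: lie_algebra_def)
  have lm: "lie_module sc br scv (V k) (act k)" using dg by (simp add: dg_module_def)
  then have vsv: "vector_space scv" and sub: "module.subspace scv (V k)"
    by (simp_all add: lie_module_def)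
  have modv: "module scv" using vsv module_iff_vector_space by blast
  have scv1: "scv 1 v = v" for v using vector_space.vector_space_assms(4)[OF vsv] .
  show ?thesis
  proof (rule lp_degree.intro)
    show "additive (br x)" for x
      by (rule additive.intro) (use la sc1 in \<open>simp add: lie_algebra_def, metis\<close>)
    show "alpha k (v + w) zs = alpha k v zs + alpha k w zs"
      if "v \<in> V k" "w \<in> V k" "length zs = k" for v w zs
    proof (cases "k \<le> u")
      case True
      then have "alpha k (scv 1 v + w) zs = sc 1 (alpha k v zs) + alpha k w zs"
        using lpf that unfolding lp_family_def by blast
      then show ?thesis using scv1 sc1 by simp
    qed (use lpf in \<open>simp add: lp_family_def\<close>)
  qed (use lm module.subspace_0[OF modv sub] module.subspace_add[OF modv sub]
      module.subspace_neg[OF modv sub] in \<open>auto simp: lie_module_def\<close>)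
qed

lemma dg_LP_module_iff_defect:
  fixes alpha :: "nat \<Rightarrow> 'v::ab_group_add \<Rightarrow> 'g list \<Rightarrow> 'g::ab_group_add"
  assumes dg: "dg_module sc br scv V act d"
    and deg: "\<And>k. lp_degree br (act k) (alpha k) (V k) k"
  shows "dg_LP_module sc br scv V act d alpha
     \<longleftrightarrow> (\<forall>k. \<forall>v\<in>V k. \<forall>xs. length xs = Suc k \<longrightarrow>
            alpha (Suc k) (d k v) xs = lp_defect br (act k) (alpha k) v xs)"
  (is "_ \<longleftrightarrow> ?defect")
proof
  assume LP: "dg_LP_module sc br scv V act d alpha"
  show ?defect
  proof (intro allI ballI impI)
    fix k v and xs :: "'g list" assume v: "v \<in> V k" and len: "length xs = Suc k"
    have "(\<lambda>_. v) \<in> cochains sc scv 0 (V k)"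
      using v by (simp add: cochains_def alt_map_def)
    then have "lp_ext alpha (Suc 0) k (ce_diff br (act k) (\<lambda>_. v)) xs
        + sgn_pow 0 (lp_ext alpha 0 (Suc k) (\<lambda>_. d k v) xs)
        = ce_diff br br (lp_ext alpha 0 k (\<lambda>_. v)) xs"
      using LP len unfolding dg_LP_module_def by fastforce
    then have "shuffle_sum {..<Suc k} 0 (\<lambda>_. alpha (Suc k) (d k v)) xs
        = shuffle_sum {..<Suc k} 0 (\<lambda>_. lp_defect br (act k) (alpha k) v) xs"
      using lp_degree.lp_equation_iff_defect[OF deg, where p=0 and eta="\<lambda>_. v" and xs=xs] v len
      by (simp add: lp_ext_eq_shuffle_sum)
    then show "alpha (Suc k) (d k v) xs = lp_defect br (act k) (alpha k) v xs"
      using len by (simp add: shuffle_sum_0 nths_all)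
  qed
next
  assume defect: ?defect
  show "dg_LP_module sc br scv V act d alpha"
    unfolding dg_LP_module_def
  proof (intro conjI dg allI ballI impI)
    fix p q eta and xs :: "'g list"
    assume "eta \<in> cochains sc scv p (V q)" and len: "length xs = p + q + 1"
    then have eta: "\<forall>ys. length ys = p \<longrightarrow> eta ys \<in> V q" by (simp add: cochains_def)
    have "shuffle_sum {..<Suc (p + q)} p (\<lambda>ys. alpha (Suc q) (d q (eta ys))) xs
        = shuffle_sum {..<Suc (p + q)} p (\<lambda>ys. lp_defect br (act q) (alpha q) (eta ys)) xs"
      using defect eta len by (intro shuffle_sum_cong) auto
    then show "lp_ext alpha (Suc p) q (ce_diff br (act q) eta) xs
        + sgn_pow p (lp_ext alpha p (Suc q) (\<lambda>ys. d q (eta ys)) xs)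
        = ce_diff br br (lp_ext alpha p q eta) xs"
      using lp_degree.lp_equation_iff_defect[OF deg eta] len by (simp add: lp_ext_eq_shuffle_sum)
  qed
qed

theorem proposition1p15:
  fixes sc :: "'k::field_char_0 \<Rightarrow> 'g::ab_group_add \<Rightarrow> 'g"
    and br :: "'g \<Rightarrow> 'g \<Rightarrow> 'g"
    and scv :: "'k \<Rightarrow> 'v::ab_group_add \<Rightarrow> 'v"
    and V :: "nat \<Rightarrow> 'v set"
    and act :: "nat \<Rightarrow> 'g \<Rightarrow> 'v \<Rightarrow> 'v"
    and d :: "nat \<Rightarrow> 'v \<Rightarrow> 'v"
    and alpha :: "nat \<Rightarrow> 'v \<Rightarrow> 'g list \<Rightarrow> 'g"
    and u :: nat
  assumes "lie_algebra sc br"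
    and "finite_dim sc"
    and "dg_module sc br scv V act d"
    and "u = min (topdeg V) (vector_space.dim sc (UNIV :: 'g set))"
    and "lp_family sc scv V u alpha"
  shows "dg_LP_module sc br scv V act d alpha \<longleftrightarrow>
    (\<forall>k\<le>u. \<forall>xs. \<forall>v\<in>V k. length xs = Suc k \<longrightarrow>
       alpha (Suc k) (d k v) xs =
         (\<Sum>i<Suc k. sgn_pow i (br (xs ! i) (alpha k v (del_nth i xs))
                                 - alpha k (act k (xs ! i) v) (del_nth i xs)))
         + (\<Sum>(i, j)\<in>{(i, j). i < j \<and> j < Suc k}.
              sgn_pow (i + j) (alpha k v (br (xs ! i) (xs ! j) # del_nth i (del_nth j xs)))))"
proof -
  have deg: "lp_degree br (act k) (alpha k) (V k) k" for k
    using assms(1,3,5) by (rule lp_degree_if_lp_family)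
  have beyond_u: "alpha (Suc k) w xs = lp_defect br (act k) (alpha k) v xs" if "u < k" for k v w xs
  proof -
    have "alpha k v' zs = 0" "alpha (Suc k) v' zs = 0" for v' zs
      using assms(5) that by (simp_all add: lp_family_def)
    moreover have "lp_defect br (act k) (alpha k) v xs = 0"
      by (rule lp_defect_eq_0) (use lp_degree.additive_br[OF deg] calculation in auto)
    ultimately show ?thesis by simp
  qed
  have "dg_LP_module sc br scv V act d alpha
     \<longleftrightarrow> (\<forall>k. \<forall>v\<in>V k. \<forall>xs. length xs = Suc k \<longrightarrow>
            alpha (Suc k) (d k v) xs = lp_defect br (act k) (alpha k) v xs)"
    using assms(3) deg by (rule dg_LP_module_iff_defect)
  also have "\<dots> \<longleftrightarrow> (\<forall>k\<le>u. \<forall>v\<in>V k. \<forall>xs. length xs = Suc k \<longrightarrow>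
            alpha (Suc k) (d k v) xs = lp_defect br (act k) (alpha k) v xs)"
    using beyond_u not_le by blast
  finally show ?thesis
    by (auto simp: lp_defect_def)
qed

end
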